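(* There exist $0\le a<c$ and $\Delta q>0$ such that, when $1/b$ is uniformly distributed on $[a,c]$, $$\frac{\mathbb E(1/b)}{M'_{1/b}(-\Delta q)}<M_{1/b}(\Delta q),$$ i.e. the R$^2$DP Laplace mechanism with uniformly distributed $1/b$ can satisfy the necessary condition for improving on the Laplace mechanism.
   Context: $M_{1/b}(t)=\mathbb E[e^{t/b}]$ is the moment generating function of $1/b$ and $M'_{1/b}$ its derivative; for the uniform distribution on $[a,c]$, $M(t)=\frac{e^{tc}-e^{ta}}{t(c-a)}$ for $t\neq0$ and $M(0)=1$. The R$^2$DP Laplace mechanism adds $\mathrm{Lap}(b)$ noise (density $\frac1{2b}e^{-|x|/b}$) with random scale $b$ to a query of sensitivity $\Delta q$. *)

theory Defs
  imports "HOL-Probability.Probability"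
begin

definition mgf :: "real measure \<Rightarrow> real \<Rightarrow> real" where
  "mgf D t = (\<integral>x. exp (t * x) \<partial>D)"

definition unif :: "real \<Rightarrow> real \<Rightarrow> real measure" where
  "unif a c = uniform_measure lborel {a..c}"

end

theory Submission
  imports Defs
begin

text \<open>Take 1/b uniform on [0,1] and \<open>\<Delta>q = 10\<close>. The mean is 1/2, \<open>M(t) = (exp t - 1) / t\<close>
  and \<open>M'(-10) = (1 - 11 exp (-10)) / 100\<close>, so the claim becomes the numerical inequality
  \<open>50 / (1 - 11 exp (-10)) < (exp 10 - 1) / 10\<close>, which holds as soon as \<open>exp 10 > 512\<close>.\<close>

lemma unif_eq_density:
  assumes "a < c"
  shows "unif a c = density lborel (\<lambda>x. ennreal (indicator {a..c} x / (c - a)))"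
proof -
  have "1 / ennreal (c - a) = ennreal (1 / (c - a))"
    using divide_ennreal[of 1 "c - a"] assms by simp
  then show ?thesis
    unfolding unif_def uniform_measure_def using assms
    by (auto intro!: density_cong split: split_indicator)
qed

lemma integral_unif_FTC:
  fixes a c :: real
  assumes "a < c"
    and G: "\<And>x. x \<in> {a..c} \<Longrightarrow> (G has_real_derivative g x) (at x within {a..c})"
    and "continuous_on {a..c} g" and "g \<in> borel_measurable borel"
  shows "(\<integral>x. g x \<partial>unif a c) = (G c - G a) / (c - a)"
proof -
  have "(\<integral>x. g x \<partial>unif a c) = (\<integral>x. (indicator {a..c} x / (c - a)) *\<^sub>R g x \<partial>lborel)"
    unfolding unif_eq_density[OF \<open>a < c\<close>] using assms
    by (intro integral_density) auto
  also have "\<dots> = (\<integral>x. indicator {a..c} x *\<^sub>R g x \<partial>lborel) / (c - a)"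
    by (simp add: mult.commute)
  also have "(\<integral>x. indicator {a..c} x *\<^sub>R g x \<partial>lborel) = G c - G a"
    using assms by (intro integral_FTC_atLeastAtMost)
      (auto simp: has_real_derivative_iff_has_vector_derivative[symmetric])
  finally show ?thesis .
qed

lemma mean_unif:
  assumes "a < c"
  shows "(\<integral>x. x \<partial>unif a c) = (a + c) / 2"
proof -
  have "(\<integral>x. x \<partial>unif a c) = (c\<^sup>2 / 2 - a\<^sup>2 / 2) / (c - a)"
    using assms
    by (intro integral_unif_FTC[where G = "\<lambda>x. x\<^sup>2 / 2"])
      (auto intro!: derivative_eq_intros continuous_intros)
  also have "\<dots> = (a + c) / 2"
    using assms by (simp add: field_simps power2_eq_square)
  finally show ?thesis .
qed

lemma mgf_unif:
  assumes "a < c" and "t \<noteq> 0"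
  shows "mgf (unif a c) t = (exp (t * c) - exp (t * a)) / (t * (c - a))"
proof -
  have "mgf (unif a c) t = (exp (t * c) / t - exp (t * a) / t) / (c - a)"
    unfolding mgf_def using assms
    by (intro integral_unif_FTC[where G = "\<lambda>x. exp (t * x) / t"])
      (auto intro!: derivative_eq_intros continuous_intros)
  then show ?thesis
    by (simp add: diff_divide_distrib)
qed

lemma mgf_unif_has_real_derivative:
  assumes "a < c" and "t \<noteq> 0"
  shows "(mgf (unif a c) has_real_derivative
      ((c * exp (t * c) - a * exp (t * a)) * t - (exp (t * c) - exp (t * a))) / (t\<^sup>2 * (c - a)))
    (at t)"
proof -
  let ?M = "\<lambda>s. (exp (s * c) - exp (s * a)) / (s * (c - a))"
  let ?D = "((c * exp (t * c) - a * exp (t * a)) * t - (exp (t * c) - exp (t * a))) / (t\<^sup>2 * (c - a))"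
  have "(?M has_real_derivative
      ((c * exp (t * c) - a * exp (t * a)) * (t * (c - a)) - (exp (t * c) - exp (t * a)) * (c - a))
        / (t * (c - a) * (t * (c - a)))) (at t)"
    using assms by (auto intro!: derivative_eq_intros)
  also have "((c * exp (t * c) - a * exp (t * a)) * (t * (c - a)) - (exp (t * c) - exp (t * a)) * (c - a))
        / (t * (c - a) * (t * (c - a))) = ?D"
    using assms by (simp add: divide_simps power2_eq_square) (simp add: algebra_simps)
  finally have "(?M has_real_derivative ?D) (at t)" .
  then show ?thesis
    by (rule has_field_derivative_transform_within_open[where S = "- {0}"])
      (auto simp: assms mgf_unif)
qed

lemma exp_10_ge_1024: "exp (10::real) \<ge> 1024"
proof -
  have "(2::real) ^ 10 \<le> exp 1 ^ 10"
    using exp_ge_add_one_self[of 1] by (intro power_mono) auto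
  also have "exp 1 ^ 10 = exp (10::real)"
    by (simp add: exp_of_nat_mult[symmetric])
  finally show ?thesis by simp
qed

lemma R2DP_condition_unif_0_1:
  "(1 / 2) / ((1 - 11 * exp (-10)) / 100) < (exp (10::real) - 1) / 10"
proof -
  define E where "E = exp (10::real)"
  have E: "E \<ge> 1024"
    using exp_10_ge_1024 by (simp add: E_def)
  have "(1 / 2) / ((1 - 11 * exp (-10)) / 100) = 50 * E / (E - 11)"
    using E by (simp add: E_def exp_minus field_simps)
  also have "\<dots> < (E - 1) / 10"
    using E mult_mono[of 1024 E 512 "E - 512"] by (simp add: field_simps algebra_simps)
  finally show ?thesis
    by (simp add: E_def)
qed

theorem lemmaB2:
  shows "\<exists>a c dq :: real. 0 \<le> a \<and> a < c \<and> dq > 0 \<and>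
     (\<exists>M'. (mgf (unif a c) has_real_derivative M') (at (- dq)) \<and>
        (\<integral>x. x \<partial>(unif a c)) / M' < mgf (unif a c) dq)"
proof (intro exI conjI)
  show "(mgf (unif 0 1) has_real_derivative (1 - 11 * exp (-10)) / 100) (at (- 10))"
    using mgf_unif_has_real_derivative[of 0 1 "-10"] by simp
  show "(\<integral>x. x \<partial>unif 0 1) / ((1 - 11 * exp (-10)) / 100) < mgf (unif 0 1) 10"
    using R2DP_condition_unif_0_1 by (simp add: mean_unif mgf_unif)
qed simp_all

end
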